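(* For all $p\in(0,1)$ and $n\ge0$, $\mathbb P_p[o\rightsquigarrow\partial B_n]=\mathbb P'_p[o\leftrightsquigarrow\partial B_n]$.
   Context: $\mathbb P_p$ is directed Bernoulli bond percolation on $\mathbb Z^d$: each directed nearest-neighbor edge $(u,v)$ ($\|u-v\|_1=1$) is open independently with probability $p$; $\{o\rightsquigarrow\partial B_n\}$ is the event that there is a path of open directed edges from the origin $o$ to a vertex of $\partial B_n$. $\mathbb P'_p$ is ordinary (undirected) Bernoulli bond percolation on the nearest-neighbor edges of $\mathbb Z^d$ with parameter $p$, and $\{o\leftrightsquigarrow\partial B_n\}$ is the event that some vertex of $\partial B_n$ is joined to $o$ by a path of open edges. Here $B_n=\{x:\|x\|_1\le n\}$, $\partial B_n=B_{n+1}\setminus B_n$. *)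

theory Defs
  imports "HOL-Probability.Probability"
begin

text \<open>Vertices of Z^d are functions 'd \<Rightarrow> int with 'd a finite index type (d = CARD('d)).\<close>

definition l1norm :: "('d::finite \<Rightarrow> int) \<Rightarrow> int" where
  "l1norm x = (\<Sum>i\<in>UNIV. \<bar>x i\<bar>)"

definition adj :: "('d::finite \<Rightarrow> int) \<Rightarrow> ('d \<Rightarrow> int) \<Rightarrow> bool" where
  "adj u v \<longleftrightarrow> l1norm (\<lambda>i. u i - v i) = 1"

definition origin :: "'d::finite \<Rightarrow> int" where
  "origin = (\<lambda>_. 0)"

definition ball_l1 :: "nat \<Rightarrow> ('d::finite \<Rightarrow> int) set" where
  "ball_l1 n = {x. l1norm x \<le> int n}"

definition bdry :: "nat \<Rightarrow> ('d::finite \<Rightarrow> int) set" where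
  "bdry n = ball_l1 (Suc n) - ball_l1 n"

definition dir_edges :: "(('d::finite \<Rightarrow> int) \<times> ('d \<Rightarrow> int)) set" where
  "dir_edges = {(u, v). adj u v}"

definition undir_edges :: "('d::finite \<Rightarrow> int) set set" where
  "undir_edges = {{u, v} | u v. adj u v}"

definition dir_perc :: "real \<Rightarrow> ((('d::finite \<Rightarrow> int) \<times> ('d \<Rightarrow> int)) \<Rightarrow> bool) measure" where
  "dir_perc p = PiM dir_edges (\<lambda>_. measure_pmf (bernoulli_pmf p))"

definition undir_perc :: "real \<Rightarrow> (('d::finite \<Rightarrow> int) set \<Rightarrow> bool) measure" where
  "undir_perc p = PiM undir_edges (\<lambda>_. measure_pmf (bernoulli_pmf p))"

definition dir_reach_event :: "nat \<Rightarrow> ((('d::finite \<Rightarrow> int) \<times> ('d \<Rightarrow> int)) \<Rightarrow> bool) set" where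
  "dir_reach_event n = {\<omega>. \<exists>x\<in>bdry n. (\<lambda>u v. adj u v \<and> \<omega> (u, v))\<^sup>*\<^sup>* origin x}"

definition undir_reach_event :: "nat \<Rightarrow> (('d::finite \<Rightarrow> int) set \<Rightarrow> bool) set" where
  "undir_reach_event n = {\<omega>. \<exists>x\<in>bdry n. (\<lambda>u v. adj u v \<and> \<omega> {u, v})\<^sup>*\<^sup>* origin x}"

end

theory Submission
  imports Defs
begin

(* Both events only involve the edges inside B_(n+1): a path from o that reaches dB_n
   first leaves B_n through a vertex of dB_n, and it stays in B_n before that.  On this
   finite graph the two product measures are compared edge by edge.  An edge {u,v}
   carries two independent arcs in the directed model and one bit opening both arcs in
   the undirected one.  Let A, B, C, D indicate that o reaches dB_n when only (u,v), only
   (v,u), both or neither of the arcs are added to the other open arcs.  An arc into a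
   vertex already reached from o, or out of a vertex not reached from o, changes nothing;
   so one of the two arcs is always useless, and A + B = C + D.  Consequently
   p^2 C + p(1-p)(A + B) + (1-p)^2 D = p C + (1-p) D, and induction on the number of
   edges equates the two probabilities. *)

definition reaches :: "('a \<times> 'a) set \<Rightarrow> 'a \<Rightarrow> 'a set \<Rightarrow> bool" where
  "reaches R s T \<longleftrightarrow> (\<exists>t\<in>T. (s, t) \<in> R\<^sup>*)"

lemma reaches_insert_redundant:
  assumes "(s, v) \<in> R\<^sup>* \<Longrightarrow> (s, u) \<in> R\<^sup>*"
  shows "reaches (insert (v, u) R) s T \<longleftrightarrow> reaches R s T"
  using assms unfolding reaches_def rtrancl_insert by (auto intro: rtrancl_trans)

definition arc_exchange :: "(('a \<times> 'a) set \<Rightarrow> real) \<Rightarrow> bool" where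
  "arc_exchange F \<longleftrightarrow>
     (\<forall>R u v. F (insert (u, v) R) + F (insert (v, u) R) = F (insert (u, v) (insert (v, u) R)) + F R)"

lemma arc_exchange_reaches: "arc_exchange (\<lambda>R. of_bool (reaches R s T))"
  unfolding arc_exchange_def
proof (intro allI)
  fix R u v
  consider "(s, u) \<in> R\<^sup>*" | "(s, v) \<in> R\<^sup>*" | "(s, u) \<notin> R\<^sup>*" "(s, v) \<notin> R\<^sup>*"
    by blast
  then show "of_bool (reaches (insert (u, v) R) s T) + of_bool (reaches (insert (v, u) R) s T) =
    of_bool (reaches (insert (u, v) (insert (v, u) R)) s T) + (of_bool (reaches R s T) :: real)"
  proof cases
    case 1
    then have "(s, u) \<in> (insert (u, v) R)\<^sup>*"
      using rtrancl_mono[of R "insert (u, v) R"] by blast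
    then show ?thesis
      using 1 reaches_insert_redundant[of s v R u] reaches_insert_redundant[of s v "insert (u, v) R" u]
      by (simp add: insert_commute)
  next
    case 2
    then have "(s, v) \<in> (insert (v, u) R)\<^sup>*"
      using rtrancl_mono[of R "insert (v, u) R"] by blast
    then show ?thesis
      using 2 reaches_insert_redundant[of s u R v] reaches_insert_redundant[of s u "insert (v, u) R" v]
      by simp
  next
    case 3
    then have "(s, u) \<notin> (insert (v, u) R)\<^sup>*"
      unfolding rtrancl_insert by blast
    then show ?thesis
      using 3 reaches_insert_redundant[of s u R v] reaches_insert_redundant[of s v R u]
        reaches_insert_redundant[of s u "insert (v, u) R" v]
      by simp
  qed
qed

lemma arc_exchange_Un: "arc_exchange F \<Longrightarrow> arc_exchange (\<lambda>R. F (X \<union> R))"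
  unfolding arc_exchange_def by simp

lemma arc_exchange_sum:
  assumes "\<And>i. i \<in> I \<Longrightarrow> arc_exchange (F i)"
  shows "arc_exchange (\<lambda>R. \<Sum>i\<in>I. c i * F i R)"
  using assms unfolding arc_exchange_def
  by (simp add: sum.distrib[symmetric] distrib_left[symmetric])

lemma arc_exchange_average:
  assumes "arc_exchange H" and "w True + w False = 1"
  shows "(\<Sum>a\<in>UNIV. \<Sum>b\<in>UNIV.
            w a * w b * H ((if a then {(u, v)} else {}) \<union> (if b then {(v, u)} else {})))
       = (\<Sum>c\<in>UNIV. w c * H (if c then {(u, v), (v, u)} else {}))"
proof -
  have swap: "H {(u, v)} + H {(v, u)} = H {(u, v), (v, u)} + H {}"
    using assms(1) unfolding arc_exchange_def by blast
  have "(\<Sum>a\<in>UNIV. \<Sum>b\<in>UNIV.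
           w a * w b * H ((if a then {(u, v)} else {}) \<union> (if b then {(v, u)} else {})))
      = w True * w True * H {(u, v), (v, u)} + w True * w False * (H {(u, v)} + H {(v, u)})
        + w False * w False * H {}"
    by (simp add: UNIV_bool insert_commute algebra_simps)
  also have "\<dots> = (w True + w False) * (w True * H {(u, v), (v, u)} + w False * H {})"
    unfolding swap by (simp add: algebra_simps)
  finally show ?thesis
    using assms(2) by (simp add: UNIV_bool)
qed

definition prod_expectation :: "('b \<Rightarrow> real) \<Rightarrow> 'i set \<Rightarrow> (('i \<Rightarrow> 'b) \<Rightarrow> real) \<Rightarrow> real" where
  "prod_expectation w I f = (\<Sum>\<omega>\<in>I \<rightarrow>\<^sub>E UNIV. (\<Prod>i\<in>I. w (\<omega> i)) * f \<omega>)"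

lemma prod_expectation_insert:
  assumes "finite I" and "a \<notin> I"
  shows "prod_expectation w (insert a I) f = (\<Sum>y\<in>UNIV. w y * prod_expectation w I (\<lambda>g. f (g(a := y))))"
proof -
  have weight: "(\<Prod>i\<in>insert a I. w ((g(a := y)) i)) = w y * (\<Prod>i\<in>I. w (g i))" for g y
  proof -
    have "(\<Prod>i\<in>I. w ((g(a := y)) i)) = (\<Prod>i\<in>I. w (g i))"
      using assms(2) by (intro prod.cong) auto
    then show ?thesis
      using assms by simp
  qed
  have "prod_expectation w (insert a I) f
      = (\<Sum>g\<in>(\<lambda>(y, g). g(a := y)) ` (UNIV \<times> (I \<rightarrow>\<^sub>E UNIV)). (\<Prod>i\<in>insert a I. w (g i)) * f g)"
    unfolding prod_expectation_def PiE_insert_eq ..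
  also have "\<dots> = (\<Sum>(y, g)\<in>UNIV \<times> (I \<rightarrow>\<^sub>E UNIV). (\<Prod>i\<in>insert a I. w ((g(a := y)) i)) * f (g(a := y)))"
    by (subst sum.reindex[OF inj_combinator[OF assms(2)]]) (simp only: comp_def case_prod_unfold)
  also have "\<dots> = (\<Sum>y\<in>UNIV. w y * prod_expectation w I (\<lambda>g. f (g(a := y))))"
    unfolding prod_expectation_def weight sum.cartesian_product[symmetric]
    by (simp add: sum_distrib_left mult.assoc)
  finally show ?thesis .
qed

lemma prod_expectation_insert_insert:
  assumes "finite I" and "a \<notin> insert b I" and "b \<notin> I"
  shows "prod_expectation w (insert a (insert b I)) f
       = (\<Sum>x\<in>UNIV. \<Sum>y\<in>UNIV. w x * w y * prod_expectation w I (\<lambda>g. f (g(b := y, a := x))))"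
  using assms by (simp add: prod_expectation_insert sum_distrib_left mult.assoc)

lemma arc_exchange_prod_expectation:
  assumes "arc_exchange F"
  shows "arc_exchange (\<lambda>X. prod_expectation w I (\<lambda>\<omega>. F (X \<union> S \<omega>)))"
proof -
  have "arc_exchange (\<lambda>X. F (X \<union> S \<omega>))" for \<omega>
    by (subst Un_commute) (rule arc_exchange_Un[OF assms])
  then show ?thesis
    unfolding prod_expectation_def by (rule arc_exchange_sum)
qed

lemma measure_PiM_pmf_singleton:
  assumes "finite J" and "\<omega> \<in> extensional J"
  shows "measure (PiM J (\<lambda>_. measure_pmf M)) {\<omega>} = (\<Prod>i\<in>J. pmf M (\<omega> i))"
proof -
  interpret product_prob_space "\<lambda>_. measure_pmf M" J
    by unfold_locales
  have emb: "prod_emb J (\<lambda>_. measure_pmf M) J (PiE J (\<lambda>i. {\<omega> i})) = {\<omega>}"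
    by (subst prod_emb_PiE_same_index) (simp_all add: PiE_singleton[OF assms(2)])
  have "measure (PiM J (\<lambda>_. measure_pmf M)) (prod_emb J (\<lambda>_. measure_pmf M) J (PiE J (\<lambda>i. {\<omega> i})))
      = (\<Prod>i\<in>J. measure (measure_pmf M) {\<omega> i})"
    using assms(1) by (intro measure_PiM_emb) auto
  then show ?thesis
    unfolding emb measure_pmf_single .
qed

lemma measure_PiM_pmf_cylinder:
  fixes M :: "'b::finite pmf" and I J :: "'i set"
  assumes "finite J" and "J \<subseteq> I" and "\<And>\<omega>. Q (restrict \<omega> J) \<longleftrightarrow> Q \<omega>"
  shows "measure (PiM I (\<lambda>_. measure_pmf M)) {\<omega> \<in> space (PiM I (\<lambda>_. measure_pmf M)). Q \<omega>}
       = prod_expectation (pmf M) J (\<lambda>\<omega>. of_bool (Q \<omega>))"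
proof -
  let ?M = "\<lambda>_::'i. measure_pmf M"
  interpret I: product_prob_space ?M I
    by unfold_locales
  interpret J: product_prob_space ?M J
    by unfold_locales
  define X where "X = {\<omega> \<in> J \<rightarrow>\<^sub>E UNIV. Q \<omega>}"
  have "finite X"
    unfolding X_def using assms(1) by (simp add: finite_PiE)
  have sets_singleton: "{\<omega>} \<in> sets (PiM J ?M)" if "\<omega> \<in> X" for \<omega>
    using that assms(1) unfolding X_def
    by (subst PiE_singleton[symmetric]) (auto simp: PiE_iff intro!: sets_PiM_I_finite)
  then have "(\<Union>\<omega>\<in>X. {\<omega>}) \<in> sets (PiM J ?M)"
    using \<open>finite X\<close> by (intro sets.finite_UN) auto
  then have "X \<in> sets (PiM J ?M)"
    by simp
  have "{\<omega> \<in> space (PiM I ?M). Q \<omega>} = prod_emb I ?M J X"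
    unfolding X_def prod_emb_def using assms(3) by (auto simp: space_PiM)
  then have "measure (PiM I ?M) {\<omega> \<in> space (PiM I ?M). Q \<omega>} = measure (PiM J ?M) X"
    using I.emeasure_PiM_emb'[OF assms(2,1) \<open>X \<in> sets (PiM J ?M)\<close>] by (simp add: measure_def)
  also have "\<dots> = (\<Sum>\<omega>\<in>X. measure (PiM J ?M) {\<omega>})"
    using \<open>finite X\<close> sets_singleton
    by (intro measure_eq_sum_singleton) (auto simp: J.emeasure_eq_measure)
  also have "\<dots> = (\<Sum>\<omega>\<in>X. \<Prod>i\<in>J. pmf M (\<omega> i))"
    using assms(1) by (intro sum.cong refl measure_PiM_pmf_singleton) (auto simp: X_def PiE_iff)
  also have "\<dots> = prod_expectation (pmf M) J (\<lambda>\<omega>. of_bool (Q \<omega>))"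
  proof -
    have "(\<Prod>i\<in>J. pmf M (\<omega> i)) * of_bool (Q \<omega>) = (if Q \<omega> then \<Prod>i\<in>J. pmf M (\<omega> i) else 0)" for \<omega>
      by simp
    then show ?thesis
      unfolding prod_expectation_def X_def using assms(1) by (simp add: sum.inter_filter finite_PiE)
  qed
  finally show ?thesis .
qed

definition arcs :: "'a set set \<Rightarrow> ('a \<times> 'a) set" where
  "arcs G = {(u, v). u \<noteq> v \<and> {u, v} \<in> G}"

definition open_arcs :: "'a set set \<Rightarrow> ('a set \<Rightarrow> bool) \<Rightarrow> ('a \<times> 'a) set" where
  "open_arcs G \<eta> = {(u, v) \<in> arcs G. \<eta> {u, v}}"

lemma arcs_empty [simp]: "arcs {} = {}"
  by (simp add: arcs_def)

lemma open_arcs_empty [simp]: "open_arcs {} \<eta> = {}"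
  by (simp add: open_arcs_def)

lemma finite_arcs:
  assumes "finite G" and "\<And>e. e \<in> G \<Longrightarrow> finite e"
  shows "finite (arcs G)"
proof (rule finite_subset)
  show "arcs G \<subseteq> \<Union>G \<times> \<Union>G"
    unfolding arcs_def by auto
  show "finite (\<Union>G \<times> \<Union>G)"
    using assms by blast
qed

lemma arcs_insert:
  assumes "u \<noteq> v"
  shows "arcs (insert {u, v} G) = insert (u, v) (insert (v, u) (arcs G))"
  using assms by (auto simp: arcs_def doubleton_eq_iff)

lemma open_arcs_insert_upd:
  assumes "{u, v} \<notin> G" and "u \<noteq> v"
  shows "open_arcs (insert {u, v} G) (\<eta>({u, v} := c))
       = (if c then {(u, v), (v, u)} else {}) \<union> open_arcs G \<eta>"
  using assms unfolding open_arcs_def arcs_def by (auto simp: doubleton_eq_iff insert_commute)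

lemma open_arcs_restrict: "open_arcs G (restrict \<eta> G) = open_arcs G \<eta>"
  unfolding open_arcs_def arcs_def by auto

lemma prod_expectation_arcs_eq_edges:
  assumes "finite G" and "\<And>e. e \<in> G \<Longrightarrow> card e = 2"
    and "w True + w False = 1" and "arc_exchange F"
  shows "prod_expectation w (arcs G) (\<lambda>\<omega>. F {d \<in> arcs G. \<omega> d})
       = prod_expectation w G (\<lambda>\<eta>. F (open_arcs G \<eta>))"
  using assms(1,2,4)
proof (induction G arbitrary: F rule: finite_induct)
  case empty
  then show ?case
    by (simp add: prod_expectation_def)
next
  case (insert e G)
  have "card e = 2"
    using insert.prems(1) by simp
  then obtain u v where e: "e = {u, v}" "u \<noteq> v"
    by (auto simp: card_2_iff)
  have new_arcs: "(u, v) \<notin> insert (v, u) (arcs G)" "(v, u) \<notin> arcs G"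
    using insert.hyps(2) e by (auto simp: arcs_def insert_commute)
  have "finite (arcs G)"
    using insert.prems(1) by (intro finite_arcs[OF insert.hyps(1)] card_ge_0_finite) auto
  define E :: "bool \<Rightarrow> bool \<Rightarrow> ('a \<times> 'a) set" where
    "E a b = (if a then {(u, v)} else {}) \<union> (if b then {(v, u)} else {})" for a b
  define H where "H X = prod_expectation w G (\<lambda>\<eta>. F (X \<union> open_arcs G \<eta>))" for X
  have "arc_exchange H"
    unfolding H_def by (rule arc_exchange_prod_expectation[OF insert.prems(2)])
  have IH: "prod_expectation w (arcs G) (\<lambda>\<omega>. F (X \<union> {d \<in> arcs G. \<omega> d})) = H X" for X
    unfolding H_def by (rule insert.IH) (simp_all add: insert.prems arc_exchange_Un)
  have open_dir: "{d \<in> insert (u, v) (insert (v, u) (arcs G)). (g((v, u) := b, (u, v) := a)) d}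
      = E a b \<union> {d \<in> arcs G. g d}" for g a b
    using new_arcs unfolding E_def by auto
  have "prod_expectation w (arcs (insert e G)) (\<lambda>\<omega>. F {d \<in> arcs (insert e G). \<omega> d})
      = (\<Sum>a\<in>UNIV. \<Sum>b\<in>UNIV. w a * w b *
           prod_expectation w (arcs G) (\<lambda>\<omega>. F (E a b \<union> {d \<in> arcs G. \<omega> d})))"
    unfolding e arcs_insert[OF e(2)] prod_expectation_insert_insert[OF \<open>finite (arcs G)\<close> new_arcs] open_dir ..
  also have "\<dots> = (\<Sum>a\<in>UNIV. \<Sum>b\<in>UNIV. w a * w b * H (E a b))"
    by (simp only: IH)
  also have "\<dots> = (\<Sum>c\<in>UNIV. w c * H (if c then {(u, v), (v, u)} else {}))"
    unfolding E_def using arc_exchange_average[OF \<open>arc_exchange H\<close> assms(3)] .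
  also have "\<dots> = prod_expectation w (insert e G) (\<lambda>\<eta>. F (open_arcs (insert e G) \<eta>))"
    unfolding H_def e using insert.hyps e
    by (simp add: prod_expectation_insert open_arcs_insert_upd)
  finally show ?case .
qed

lemma rtrancl_exit_through:
  assumes "(s, t) \<in> R\<^sup>*" and "s \<in> B" and "t \<notin> B"
    and "\<And>x y. (x, y) \<in> R \<Longrightarrow> x \<in> B \<Longrightarrow> y \<in> B \<union> D"
  shows "\<exists>d\<in>D. (s, d) \<in> (R \<inter> B \<times> (B \<union> D))\<^sup>*"
proof -
  let ?S = "R \<inter> B \<times> (B \<union> D)"
  have "(y \<in> B \<and> (s, y) \<in> ?S\<^sup>*) \<or> (\<exists>d\<in>D. (s, d) \<in> ?S\<^sup>*)" if "(s, y) \<in> R\<^sup>*" for y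
    using that
  proof (induction rule: rtrancl_induct)
    case base
    then show ?case
      using assms(2) by simp
  next
    case (step y z)
    show ?case
    proof (cases "y \<in> B \<and> (s, y) \<in> ?S\<^sup>*")
      case True
      then have "z \<in> B \<union> D"
        using step.hyps(2) assms(4) by blast
      then have "(y, z) \<in> ?S"
        using True step.hyps(2) by blast
      then have "(s, z) \<in> ?S\<^sup>*"
        using True by (meson rtrancl.rtrancl_into_rtrancl)
      then show ?thesis
        using \<open>z \<in> B \<union> D\<close> by blast
    next
      case False
      then show ?thesis
        using step.IH by blast
    qed
  qed
  then show ?thesis
    using assms(1,3) by blast
qed

lemma adj_sym: "adj u v \<longleftrightarrow> adj v u"
  unfolding adj_def l1norm_def by (simp add: abs_minus_commute)

lemma adj_imp_neq: "adj u v \<Longrightarrow> u \<noteq> v"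
  unfolding adj_def l1norm_def by auto

lemma l1norm_le_adj:
  assumes "adj u v"
  shows "l1norm v \<le> l1norm u + 1"
proof -
  have "l1norm v \<le> (\<Sum>i\<in>UNIV. \<bar>u i\<bar> + \<bar>u i - v i\<bar>)"
    unfolding l1norm_def by (intro sum_mono) auto
  also have "\<dots> = l1norm u + 1"
    using assms unfolding adj_def l1norm_def by (simp add: sum.distrib)
  finally show ?thesis .
qed

lemma finite_ball_l1: "finite (ball_l1 n :: ('d::finite \<Rightarrow> int) set)"
proof (rule finite_subset)
  show "ball_l1 n \<subseteq> (UNIV :: 'd set) \<rightarrow>\<^sub>E {- int n..int n}"
  proof
    fix x :: "'d \<Rightarrow> int"
    assume "x \<in> ball_l1 n"
    then have "\<bar>x i\<bar> \<le> int n" for i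
      using member_le_sum[of i UNIV "\<lambda>i. \<bar>x i\<bar>"] unfolding ball_l1_def l1norm_def by simp
    then show "x \<in> UNIV \<rightarrow>\<^sub>E {- int n..int n}"
      by (auto simp: PiE_iff abs_le_iff minus_le_iff)
  qed
qed (simp add: finite_PiE)

lemma origin_in_ball_l1: "origin \<in> ball_l1 n"
  unfolding origin_def ball_l1_def l1norm_def by simp

lemma ball_l1_Un_bdry: "ball_l1 n \<union> bdry n = ball_l1 (Suc n)"
  unfolding bdry_def ball_l1_def by auto

definition ball_edges :: "nat \<Rightarrow> ('d::finite \<Rightarrow> int) set set" where
  "ball_edges n = {{u, v} | u v. adj u v \<and> u \<in> ball_l1 (Suc n) \<and> v \<in> ball_l1 (Suc n)}"

lemma arcs_ball_edges:
  "arcs (ball_edges n) = {(u, v). adj u v \<and> u \<in> ball_l1 (Suc n) \<and> v \<in> ball_l1 (Suc n)}"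
  unfolding arcs_def ball_edges_def using adj_imp_neq
  by (auto simp: doubleton_eq_iff) (metis adj_sym)+

lemma finite_arcs_ball_edges: "finite (arcs (ball_edges n))"
proof (rule finite_subset)
  show "arcs (ball_edges n) \<subseteq> ball_l1 (Suc n) \<times> ball_l1 (Suc n)"
    unfolding arcs_ball_edges by auto
qed (simp add: finite_ball_l1)

lemma finite_ball_edges: "finite (ball_edges n)"
proof -
  have "ball_edges n = (\<lambda>(u, v). {u, v}) ` arcs (ball_edges n)"
    unfolding arcs_ball_edges unfolding ball_edges_def by auto
  then show ?thesis
    by (metis finite_imageI finite_arcs_ball_edges)
qed

lemma card_ball_edges: "e \<in> ball_edges n \<Longrightarrow> card e = 2"
  unfolding ball_edges_def by (auto dest: adj_imp_neq)

lemma reaches_bdry_in_ball: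
  "(\<exists>x\<in>bdry n. (\<lambda>u v. adj u v \<and> E u v)\<^sup>*\<^sup>* origin x)
     \<longleftrightarrow> reaches {(u, v) \<in> arcs (ball_edges n). E u v} origin (bdry n)"
proof -
  define R where "R = {(u, v). adj u v \<and> E u v}"
  have rel: "(\<lambda>u v. adj u v \<and> E u v)\<^sup>*\<^sup>* = (\<lambda>x y. (x, y) \<in> R\<^sup>*)"
    unfolding R_def by (simp add: rtranclp_rtrancl_eq[symmetric])
  have restricted: "{(u, v) \<in> arcs (ball_edges n). E u v} = R \<inter> ball_l1 (Suc n) \<times> ball_l1 (Suc n)"
    unfolding R_def arcs_ball_edges by auto
  have "reaches (R \<inter> ball_l1 (Suc n) \<times> ball_l1 (Suc n)) origin (bdry n)"
    if "x \<in> bdry n" "(origin, x) \<in> R\<^sup>*" for x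
  proof -
    have "y \<in> ball_l1 n \<union> bdry n" if "(x, y) \<in> R" "x \<in> ball_l1 n" for x y
      using that l1norm_le_adj unfolding R_def bdry_def ball_l1_def by fastforce
    then obtain d where "d \<in> bdry n" "(origin, d) \<in> (R \<inter> ball_l1 n \<times> (ball_l1 n \<union> bdry n))\<^sup>*"
      using rtrancl_exit_through[OF \<open>(origin, x) \<in> R\<^sup>*\<close> origin_in_ball_l1] \<open>x \<in> bdry n\<close>
      unfolding bdry_def by blast
    moreover have "R \<inter> ball_l1 n \<times> (ball_l1 n \<union> bdry n) \<subseteq> R \<inter> ball_l1 (Suc n) \<times> ball_l1 (Suc n)"
      unfolding ball_l1_Un_bdry by (auto simp: ball_l1_def)
    ultimately show ?thesis
      unfolding reaches_def using rtrancl_mono by blast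
  qed
  moreover have "\<exists>x\<in>bdry n. (origin, x) \<in> R\<^sup>*"
    if "reaches (R \<inter> ball_l1 (Suc n) \<times> ball_l1 (Suc n)) origin (bdry n)"
    using that rtrancl_mono[of "R \<inter> _" R] unfolding reaches_def by blast
  ultimately show ?thesis
    unfolding rel restricted by blast
qed

lemma dir_reach_event_iff:
  "\<omega> \<in> dir_reach_event n \<longleftrightarrow> reaches {d \<in> arcs (ball_edges n). \<omega> d} origin (bdry n)"
  unfolding dir_reach_event_def using reaches_bdry_in_ball[of n "\<lambda>u v. \<omega> (u, v)"]
  by (simp add: case_prod_beta')

lemma undir_reach_event_iff:
  "\<eta> \<in> undir_reach_event n \<longleftrightarrow> reaches (open_arcs (ball_edges n) \<eta>) origin (bdry n)"
  unfolding undir_reach_event_def open_arcs_def using reaches_bdry_in_ball[of n "\<lambda>u v. \<eta> {u, v}"]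
  by simp

lemma measure_dir_reach_event:
  "measure (dir_perc p)
     (dir_reach_event n \<inter> space (dir_perc p) :: ((('d::finite \<Rightarrow> int) \<times> ('d \<Rightarrow> int)) \<Rightarrow> bool) set)
   = prod_expectation (pmf (bernoulli_pmf p)) (arcs (ball_edges n :: ('d \<Rightarrow> int) set set))
       (\<lambda>\<omega>. of_bool (reaches {d \<in> arcs (ball_edges n). \<omega> d} origin (bdry n)))"
proof -
  let ?A = "arcs (ball_edges n :: ('d \<Rightarrow> int) set set)"
  have event: "dir_reach_event n \<inter> space (dir_perc p)
      = {\<omega> \<in> space (dir_perc p). reaches {d \<in> ?A. \<omega> d} origin (bdry n)}"
    by (auto simp: dir_reach_event_iff)
  have "?A \<subseteq> dir_edges"
    unfolding arcs_ball_edges dir_edges_def by auto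
  moreover have "{d \<in> ?A. restrict \<omega> ?A d} = {d \<in> ?A. \<omega> d}" for \<omega>
    by auto
  ultimately show ?thesis
    unfolding event unfolding dir_perc_def
    by (intro measure_PiM_pmf_cylinder finite_arcs_ball_edges) simp_all
qed

lemma measure_undir_reach_event:
  "measure (undir_perc p)
     (undir_reach_event n \<inter> space (undir_perc p) :: (('d::finite \<Rightarrow> int) set \<Rightarrow> bool) set)
   = prod_expectation (pmf (bernoulli_pmf p)) (ball_edges n :: ('d \<Rightarrow> int) set set)
       (\<lambda>\<eta>. of_bool (reaches (open_arcs (ball_edges n) \<eta>) origin (bdry n)))"
proof -
  let ?G = "ball_edges n :: ('d \<Rightarrow> int) set set"
  have event: "undir_reach_event n \<inter> space (undir_perc p)
      = {\<eta> \<in> space (undir_perc p). reaches (open_arcs ?G \<eta>) origin (bdry n)}"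
    by (auto simp: undir_reach_event_iff)
  have "?G \<subseteq> undir_edges"
    unfolding ball_edges_def undir_edges_def by auto
  then show ?thesis
    unfolding event unfolding undir_perc_def
    by (intro measure_PiM_pmf_cylinder finite_ball_edges) (simp_all only: open_arcs_restrict)
qed

lemma pmf_True_add_False: "pmf q True + pmf q False = 1"
proof -
  have "sum (pmf q) UNIV = 1"
    by (rule sum_pmf_eq_1) auto
  then show ?thesis
    by (simp add: UNIV_bool add.commute)
qed

theorem lemma3p4:
  fixes p :: real and n :: nat
  assumes "0 < p" and "p < 1"
  shows "measure (dir_perc p :: ((('d::finite \<Rightarrow> int) \<times> ('d \<Rightarrow> int)) \<Rightarrow> bool) measure)
           (dir_reach_event n \<inter> space (dir_perc p))
       = measure (undir_perc p :: (('d \<Rightarrow> int) set \<Rightarrow> bool) measure)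
           (undir_reach_event n \<inter> space (undir_perc p))"
  unfolding measure_dir_reach_event measure_undir_reach_event
  by (intro prod_expectation_arcs_eq_edges finite_ball_edges card_ball_edges pmf_True_add_False
      arc_exchange_reaches)

end
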